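(* Fix an integer $m\ge2$. Define $a^{(m)}_n=0$ if $n$ is not a power of $m$, $a^{(m)}_1=1$, and $a^{(m)}_{m^k}=(m/2)^{k/2}(-1)^{k+1}$ for $k\ge1$. Then $T_mf(x)=\sum_n a^{(m)}_nf(nx)$ satisfies $\|T_mf\|_{L^2}=\sqrt2\,\|f\|_{L^2}$ for all $f\in C_0(0,\infty)$, and hence extends to $\sqrt2$ times a unitary operator on $L^2[0,\infty)$.
   Context: $C_0(0,\infty)$ denotes continuous compactly supported functions on $(0,\infty)$; $L^2=L^2[0,\infty)$ with Lebesgue measure. *)

theory Defs
  imports "HOL-Analysis.Analysis"
begin

text \<open>Coefficients a^(m)_n: zero unless n is a power of m; a_1 = 1;
  a_(m^k) = (m/2)^(k/2) (-1)^(k+1) for k >= 1.  (a_0 = 0 since 0 is no power of m >= 2.)\<close>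
definition acoef :: "nat \<Rightarrow> nat \<Rightarrow> real" where
  "acoef m n = (if n = 1 then 1
     else if (\<exists>k. n = m ^ k)
       then (let k = (THE k. n = m ^ k) in
               (real m / 2) powr (real k / 2) * (-1) ^ (k + 1))
       else 0)"

definition Top :: "nat \<Rightarrow> (real \<Rightarrow> complex) \<Rightarrow> real \<Rightarrow> complex" where
  "Top m f x = (\<Sum>n. complex_of_real (acoef m n) * f (real n * x))"

text \<open>C_0(0,oo): continuous functions with compact support in (0,oo),
  regarded as functions on the reals vanishing outside that support.\<close>
definition C0 :: "(real \<Rightarrow> complex) \<Rightarrow> bool" where
  "C0 f \<longleftrightarrow> continuous_on {0<..} f \<and>
     (\<exists>a b. 0 < a \<and> a \<le> b \<and> (\<forall>x. x \<notin> {a..b} \<longrightarrow> f x = 0))"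

text \<open>Elements of L^2[0,oo) (represented by functions; equality is a.e. on [0,oo)).\<close>
definition L2 :: "(real \<Rightarrow> complex) \<Rightarrow> bool" where
  "L2 f \<longleftrightarrow> f \<in> borel_measurable lborel \<and>
     set_integrable lborel {0..} (\<lambda>x. (cmod (f x))\<^sup>2)"

definition L2norm :: "(real \<Rightarrow> complex) \<Rightarrow> real" where
  "L2norm f = sqrt (LINT x:{0..}|lborel. (cmod (f x))\<^sup>2)"

definition ae_eq0 :: "(real \<Rightarrow> complex) \<Rightarrow> (real \<Rightarrow> complex) \<Rightarrow> bool" where
  "ae_eq0 f g \<longleftrightarrow> (AE x in lborel. x \<ge> 0 \<longrightarrow> f x = g x)"

end

theory Submission
  imports Defs
begin

(* Write D_l f = f(l .) for the dilation and q = sqrt(m/2).  The coefficients are a_1 = 1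
   and a_(m^k) = -(-q)^k, so T_m = 2 I - N, where N = sum_k (-q)^k D_m^k is the Neumann
   series inverting I + q D_m.  For h = N f one has f = h + q D_m h and
   T_m f = h + 2 q D_m h, and the pointwise identity
     |u + 2 q v|^2 + |u|^2 = 2 |u + q v|^2 + m |v|^2        (q^2 = m/2)
   integrates, by m ||D_m h||^2 = ||h||^2, to ||T_m f||^2 = 2 ||f||^2.  Surjectivity comes
   from inverting I + 2 q D_m = 2 q D_m (I + (2q)^-1 D_(1/m)) by a second Neumann series.
   The analytic input is that weighted orbit sums sum w^k |f(l^k x)| with w^2 < l converge
   a.e. and are square integrable (weighted Cauchy-Schwarz and monotone convergence); this
   justifies every pointwise manipulation of the series. *)

definition L2sq :: "(real \<Rightarrow> complex) \<Rightarrow> ennreal" where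
  "L2sq f = (\<integral>\<^sup>+x. ennreal (indicator {0..} x * (cmod (f x))\<^sup>2) \<partial>lborel)"

lemma L2_iff_L2sq: "L2 f \<longleftrightarrow> f \<in> borel_measurable borel \<and> L2sq f < \<infinity>"
proof (cases "f \<in> borel_measurable borel")
  case True
  then have "integrable lborel (\<lambda>x. indicator {0..} x * (cmod (f x))\<^sup>2) \<longleftrightarrow> L2sq f < \<infinity>"
    unfolding integrable_iff_bounded L2sq_def by (simp add: abs_mult)
  then show ?thesis using True unfolding L2_def set_integrable_def by simp
qed (simp add: L2_def)

lemma L2norm_L2sq:
  assumes "f \<in> borel_measurable borel"
  shows "L2norm f = sqrt (enn2real (L2sq f))"
  using assms unfolding L2norm_def L2sq_def set_lebesgue_integral_def
  by (subst integral_eq_nn_integral) auto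

lemma nn_integral_halfline_dilate:
  fixes F :: "real \<Rightarrow> real"
  assumes [measurable]: "F \<in> borel_measurable borel" and c: "c > 0"
  shows "(\<integral>\<^sup>+x. ennreal (indicator {0..} x * F (c * x)) \<partial>lborel)
     = ennreal (1 / c) * (\<integral>\<^sup>+x. ennreal (indicator {0..} x * F x) \<partial>lborel)"
proof -
  have ind: "indicator {0..} (c * x) = (indicator {0..} x :: real)" for x
    using c by (auto simp: indicator_def zero_le_mult_iff)
  have "(\<integral>\<^sup>+x. ennreal (indicator {0..} x * F x) \<partial>lborel)
      = ennreal c * (\<integral>\<^sup>+x. ennreal (indicator {0..} x * F (c * x)) \<partial>lborel)"
    using nn_integral_real_affine[of "\<lambda>x. ennreal (indicator {0..} x * F x)" c 0] c
    by (simp add: ind)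
  moreover have "ennreal (1 / c) * ennreal c = 1"
    using c by (simp flip: ennreal_mult)
  ultimately show ?thesis by (simp add: mult.assoc[symmetric])
qed

lemma L2sq_dilate:
  assumes [measurable]: "f \<in> borel_measurable borel" and "c > 0"
  shows "L2sq (\<lambda>x. f (c * x)) = ennreal (1 / c) * L2sq f"
  unfolding L2sq_def
  by (rule nn_integral_halfline_dilate[where F = "\<lambda>y. (cmod (f y))\<^sup>2"]) (use assms in auto)

lemma L2sq_cmult:
  assumes [measurable]: "f \<in> borel_measurable borel"
  shows "L2sq (\<lambda>x. a * f x) = ennreal ((cmod a)\<^sup>2) * L2sq f"
proof -
  have "L2sq (\<lambda>x. a * f x)
      = (\<integral>\<^sup>+x. ennreal ((cmod a)\<^sup>2) * ennreal (indicator {0..} x * (cmod (f x))\<^sup>2) \<partial>lborel)"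
    unfolding L2sq_def
    by (intro nn_integral_cong) (simp add: norm_mult power_mult_distrib mult_ac flip: ennreal_mult)
  also have "\<dots> = ennreal ((cmod a)\<^sup>2) * L2sq f"
    unfolding L2sq_def by (rule nn_integral_cmult) measurable
  finally show ?thesis .
qed

lemma cmod_add_sq_le: "(cmod (a + b))\<^sup>2 \<le> 2 * (cmod a)\<^sup>2 + 2 * (cmod b)\<^sup>2"
proof -
  have "(cmod (a + b))\<^sup>2 \<le> (cmod a + cmod b)\<^sup>2"
    by (intro power_mono norm_triangle_ineq) simp
  also have "\<dots> \<le> 2 * (cmod a)\<^sup>2 + 2 * (cmod b)\<^sup>2"
    using sum_squares_ge_zero[of "cmod a - cmod b" 0] by (simp add: power2_eq_square algebra_simps)
  finally show ?thesis .
qed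

lemma L2sq_add_le:
  assumes [measurable]: "f \<in> borel_measurable borel" "g \<in> borel_measurable borel"
  shows "L2sq (\<lambda>x. f x + g x) \<le> 2 * L2sq f + 2 * L2sq g"
proof -
  define F where "F x = indicator {0..} x * (cmod (f x))\<^sup>2" for x
  define G where "G x = indicator {0..} x * (cmod (g x))\<^sup>2" for x
  have "L2sq (\<lambda>x. f x + g x) \<le> (\<integral>\<^sup>+x. ennreal (2 * F x) + ennreal (2 * G x) \<partial>lborel)"
    unfolding L2sq_def
  proof (intro nn_integral_mono)
    fix x
    have "indicator {0..} x * (cmod (f x + g x))\<^sup>2 \<le> 2 * F x + 2 * G x"
      using cmod_add_sq_le[of "f x" "g x"] by (auto simp: indicator_def F_def G_def)
    then show "ennreal (indicator {0..} x * (cmod (f x + g x))\<^sup>2) \<le> ennreal (2 * F x) + ennreal (2 * G x)"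
      by (simp add: F_def G_def ennreal_leI flip: ennreal_plus del: ennreal_plus)
  qed
  also have "\<dots> = 2 * L2sq f + 2 * L2sq g"
    unfolding L2sq_def F_def G_def by (simp add: nn_integral_add ennreal_mult nn_integral_cmult)
  finally show ?thesis .
qed

lemma L2_add:
  assumes "L2 f" "L2 g"
  shows "L2 (\<lambda>x. f x + g x)"
proof -
  have [measurable]: "f \<in> borel_measurable borel" "g \<in> borel_measurable borel"
    using assms L2_iff_L2sq by blast+
  have "L2sq (\<lambda>x. f x + g x) < \<infinity>"
    using L2sq_add_le[of f g] assms unfolding L2_iff_L2sq
    by (auto simp: ennreal_mult_less_top intro: le_less_trans)
  then show ?thesis unfolding L2_iff_L2sq by simp
qed

lemma L2_cmult:
  assumes "L2 f"
  shows "L2 (\<lambda>x. a * f x)"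
proof -
  have [measurable]: "f \<in> borel_measurable borel" using assms L2_iff_L2sq by blast
  show ?thesis using assms unfolding L2_iff_L2sq by (simp add: L2sq_cmult ennreal_mult_less_top)
qed

lemma L2_dilate:
  assumes "L2 f" "c > 0"
  shows "L2 (\<lambda>x. f (c * x))"
proof -
  have [measurable]: "f \<in> borel_measurable borel" using assms L2_iff_L2sq by blast
  show ?thesis using assms unfolding L2_iff_L2sq by (simp add: L2sq_dilate ennreal_mult_less_top)
qed

lemma L2norm_cmult:
  assumes "f \<in> borel_measurable borel"
  shows "L2norm (\<lambda>x. a * f x) = cmod a * L2norm f"
  using assms by (simp add: L2norm_L2sq L2sq_cmult enn2real_mult real_sqrt_mult)

lemma L2sq_pointwise_identity:
  assumes [measurable]: "a \<in> borel_measurable borel" "b \<in> borel_measurable borel"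
      "c \<in> borel_measurable borel" "d \<in> borel_measurable borel"
    and \<alpha>: "\<alpha> \<ge> 0" and \<beta>: "\<beta> \<ge> 0"
    and eq: "AE x in lborel. 0 \<le> x \<longrightarrow>
      (cmod (a x))\<^sup>2 + (cmod (b x))\<^sup>2 = \<alpha> * (cmod (c x))\<^sup>2 + \<beta> * (cmod (d x))\<^sup>2"
  shows "L2sq a + L2sq b = ennreal \<alpha> * L2sq c + ennreal \<beta> * L2sq d"
proof -
  let ?I = "\<lambda>g x. indicator {0..} x * (cmod (g x))\<^sup>2 :: real"
  have "AE x in lborel. ennreal (?I a x) + ennreal (?I b x) = ennreal \<alpha> * ennreal (?I c x) + ennreal \<beta> * ennreal (?I d x)"
    using eq proof eventually_elim
    case (elim x)
    then show ?case using \<alpha> \<beta>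
      by (cases "0 \<le> x") (simp_all add: indicator_def distrib_left flip: ennreal_plus ennreal_mult)
  qed
  then have "(\<integral>\<^sup>+x. ennreal (?I a x) + ennreal (?I b x) \<partial>lborel)
      = (\<integral>\<^sup>+x. ennreal \<alpha> * ennreal (?I c x) + ennreal \<beta> * ennreal (?I d x) \<partial>lborel)"
    by (rule nn_integral_cong_AE)
  then show ?thesis
    unfolding L2sq_def by (simp add: nn_integral_add nn_integral_cmult)
qed

lemma C0_imp_L2:
  assumes "C0 f"
  shows "L2 f"
proof -
  obtain a b where cont: "continuous_on {0<..} f" and ab: "0 < a" "a \<le> b"
    and zero: "\<And>x. x \<notin> {a..b} \<Longrightarrow> f x = 0"
    using assms unfolding C0_def by blast
  have f_eq: "f = (\<lambda>x. if x \<in> {0<..} then f x else 0)"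
    using zero ab by (auto intro!: ext)
  have fm: "f \<in> borel_measurable borel"
    by (subst f_eq, rule borel_measurable_continuous_on_if) (use cont in auto)
  have "compact (f ` {a..b})"
    using ab by (intro compact_continuous_image continuous_on_subset[OF cont]) auto
  then obtain B where B: "\<And>x. x \<in> {a..b} \<Longrightarrow> cmod (f x) \<le> B"
    using compact_imp_bounded bounded_pos by (metis imageI)
  have "L2sq f \<le> (\<integral>\<^sup>+x. ennreal (B\<^sup>2) * indicator {a..b} x \<partial>lborel)"
    unfolding L2sq_def
  proof (rule nn_integral_mono)
    fix x
    show "ennreal (indicator {0..} x * (cmod (f x))\<^sup>2) \<le> ennreal (B\<^sup>2) * indicator {a..b} x"
    proof (cases "x \<in> {a..b}")
      case True
      then have "(cmod (f x))\<^sup>2 \<le> B\<^sup>2" using B by (intro power_mono) auto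
      then show ?thesis using True ab by (auto simp: indicator_def intro: ennreal_leI)
    qed (simp add: zero)
  qed
  also have "\<dots> = ennreal (B\<^sup>2) * emeasure lborel {a..b}"
    by (rule nn_integral_cmult_indicator) simp
  also have "\<dots> < \<infinity>" using ab by (simp add: ennreal_mult_less_top)
  finally show ?thesis unfolding L2_iff_L2sq using fm by simp
qed

lemma power_sq_commute: "((x::real) ^ k)\<^sup>2 = (x\<^sup>2) ^ k"
  by (simp add: power_mult[symmetric] mult.commute)

lemma weighted_series_sq_bound:
  fixes u :: "nat \<Rightarrow> real" and w \<rho> :: real
  assumes u: "\<And>k. u k \<ge> 0" and w: "0 \<le> w" and w\<rho>: "w\<^sup>2 < \<rho>"
    and s: "summable (\<lambda>k. \<rho>^k * (u k)\<^sup>2)"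
  shows "summable (\<lambda>k. w^k * u k)"
    and "(\<Sum>k. w^k * u k)\<^sup>2 \<le> \<rho> / (\<rho> - w\<^sup>2) * (\<Sum>k. \<rho>^k * (u k)\<^sup>2)"
proof -
  have \<rho>: "\<rho> > 0" using w\<rho> by (smt (verit) zero_le_power2)
  define C where "C = \<rho> / (\<rho> - w\<^sup>2)"
  have C: "C > 0" using \<rho> w\<rho> by (simp add: C_def)
  define B where "B = (\<Sum>k. \<rho>^k * (u k)\<^sup>2)"
  have B: "B \<ge> 0" unfolding B_def using s \<rho> by (intro suminf_nonneg) auto
  have geom: "(\<Sum>k. (w\<^sup>2 / \<rho>)^k) = C"
    using \<rho> w\<rho> by (subst suminf_geometric) (auto simp: C_def field_simps)
  have partial: "(\<Sum>k<n. w^k * u k) \<le> sqrt (C * B)" for n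
  proof -
    define a where "a k = sqrt (w\<^sup>2 / \<rho>) ^ k" for k
    define d where "d k = sqrt \<rho> ^ k * u k" for k
    have "sqrt (w\<^sup>2 / \<rho>) * sqrt \<rho> = w" using \<rho> w by (simp flip: real_sqrt_mult)
    then have ad: "a k * d k = w^k * u k" for k
      unfolding a_def d_def by (metis mult.assoc power_mult_distrib)
    have a2: "(a k)\<^sup>2 = (w\<^sup>2 / \<rho>)^k" for k
      using \<rho> unfolding a_def power_sq_commute by simp
    have d2: "(d k)\<^sup>2 = \<rho>^k * (u k)\<^sup>2" for k
      using \<rho> unfolding d_def power_mult_distrib power_sq_commute by simp
    have "(\<Sum>k<n. (a k)\<^sup>2) \<le> (\<Sum>k. (w\<^sup>2 / \<rho>)^k)"
      unfolding a2 using \<rho> w\<rho> by (intro sum_le_suminf summable_geometric) auto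
    moreover have "(\<Sum>k<n. (d k)\<^sup>2) \<le> B"
      unfolding d2 B_def using s \<rho> by (intro sum_le_suminf) auto
    ultimately have "(\<Sum>k<n. (a k)\<^sup>2) * (\<Sum>k<n. (d k)\<^sup>2) \<le> C * B"
      using C unfolding geom by (intro mult_mono) (auto intro: sum_nonneg)
    then have "(\<Sum>k<n. a k * d k)\<^sup>2 \<le> C * B"
      using Cauchy_Schwarz_ineq_sum[of a d "{..<n}"] by linarith
    then show ?thesis unfolding ad by (rule real_le_rsqrt)
  qed
  show sw: "summable (\<lambda>k. w^k * u k)"
    using partial u w by (intro summableI_nonneg_bounded) auto
  have "(\<Sum>k. w^k * u k) \<le> sqrt (C * B)" by (rule suminf_le_const[OF sw partial])
  moreover have "0 \<le> (\<Sum>k. w^k * u k)" using sw u w by (intro suminf_nonneg) auto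
  ultimately have "(\<Sum>k. w^k * u k)\<^sup>2 \<le> (sqrt (C * B))\<^sup>2" by (rule power_mono)
  also have "\<dots> = C * B" using \<rho> w\<rho> B by (simp add: C_def)
  finally show "(\<Sum>k. w^k * u k)\<^sup>2 \<le> \<rho> / (\<rho> - w\<^sup>2) * (\<Sum>k. \<rho>^k * (u k)\<^sup>2)"
    unfolding C_def B_def .
qed

lemma weighted_orbit_energy:
  assumes f: "L2 f" and l: "l > 0" and \<rho>: "\<rho> > 0" "\<rho> < l"
  shows "(\<integral>\<^sup>+x. (\<Sum>k. ennreal (\<rho>^k * (indicator {0..} x * (cmod (f (l^k * x)))\<^sup>2))) \<partial>lborel) < \<infinity>"
proof -
  have [measurable]: "f \<in> borel_measurable borel" and fN: "L2sq f < \<infinity>"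
    using f L2_iff_L2sq by auto
  have energy_k: "(\<integral>\<^sup>+x. ennreal (\<rho>^k * (indicator {0..} x * (cmod (f (l^k * x)))\<^sup>2)) \<partial>lborel)
      = ennreal ((\<rho> / l)^k) * L2sq f" for k
  proof -
    have "(\<integral>\<^sup>+x. ennreal (\<rho>^k * (indicator {0..} x * (cmod (f (l^k * x)))\<^sup>2)) \<partial>lborel)
        = ennreal (\<rho>^k) * L2sq (\<lambda>x. f (l^k * x))"
      unfolding L2sq_def using \<rho> by (simp add: ennreal_mult nn_integral_cmult)
    also have "\<dots> = ennreal (\<rho>^k) * ennreal (1 / l^k) * L2sq f"
      using l by (simp add: L2sq_dilate mult.assoc)
    also have "ennreal (\<rho>^k) * ennreal (1 / l^k) = ennreal ((\<rho> / l)^k)"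
      using \<rho> l by (simp add: power_divide ennreal_mult[symmetric])
    finally show ?thesis .
  qed
  have "(\<integral>\<^sup>+x. (\<Sum>k. ennreal (\<rho>^k * (indicator {0..} x * (cmod (f (l^k * x)))\<^sup>2))) \<partial>lborel)
      = (\<Sum>k. ennreal ((\<rho> / l)^k)) * L2sq f"
    by (simp add: nn_integral_suminf energy_k ennreal_suminf_multc)
  also have "(\<Sum>k. ennreal ((\<rho> / l)^k)) = ennreal (\<Sum>k. (\<rho> / l)^k)"
    using \<rho> l by (intro suminf_ennreal2 summable_geometric) auto
  finally show ?thesis using fN by (simp add: ennreal_mult_less_top)
qed

(* Absolute summability of the dilation orbit of f at x with geometric weights w^k; this is
   the pointwise condition under which the series defining T_m may be manipulated. *)
definition orbit_summable :: "real \<Rightarrow> real \<Rightarrow> (real \<Rightarrow> complex) \<Rightarrow> real \<Rightarrow> bool" where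
  "orbit_summable w l f x \<longleftrightarrow> summable (\<lambda>k. w^k * cmod (f (l^k * x)))"

lemma orbit_summable_dilate:
  "orbit_summable w l (\<lambda>y. f (l * y)) x \<longleftrightarrow> orbit_summable w l f (l * x)"
  unfolding orbit_summable_def by (simp add: mult.left_commute)

lemma orbit_summable_step:
  assumes "orbit_summable w l f x" "w > 0"
  shows "orbit_summable w l f (l * x)"
proof -
  have "summable (\<lambda>k. w^Suc k * cmod (f (l^Suc k * x)))"
    using assms(1) unfolding orbit_summable_def by (subst summable_Suc_iff)
  then have "summable (\<lambda>k. (1 / w) * (w^Suc k * cmod (f (l^Suc k * x))))"
    by (rule summable_mult)
  moreover have "(1 / w) * (w^Suc k * cmod (f (l^Suc k * x))) = w^k * cmod (f (l^k * (l * x)))" for k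
    using assms(2) by (simp add: mult.assoc mult.left_commute)
  ultimately show ?thesis unfolding orbit_summable_def by simp
qed

lemma orbit_summable_add:
  assumes "orbit_summable w l f x" "orbit_summable w l g x" "w \<ge> 0"
  shows "orbit_summable w l (\<lambda>y. f y + a * g y) x"
  unfolding orbit_summable_def
proof (rule summable_comparison_test')
  show "summable (\<lambda>k. w^k * cmod (f (l^k * x)) + cmod a * (w^k * cmod (g (l^k * x))))"
    using assms unfolding orbit_summable_def by (intro summable_add summable_mult)
  show "norm (w^k * cmod (f (l^k * x) + a * g (l^k * x)))
      \<le> w^k * cmod (f (l^k * x)) + cmod a * (w^k * cmod (g (l^k * x)))" for k
  proof -
    have "cmod (f (l^k * x) + a * g (l^k * x)) \<le> cmod (f (l^k * x)) + cmod a * cmod (g (l^k * x))"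
      by (metis norm_mult norm_triangle_ineq)
    then have "w^k * cmod (f (l^k * x) + a * g (l^k * x))
        \<le> w^k * (cmod (f (l^k * x)) + cmod a * cmod (g (l^k * x)))"
      using assms(3) by (simp add: mult_left_mono)
    then show ?thesis using assms(3) by (simp add: algebra_simps)
  qed
qed

(* Choose w^2 < rho < l
   and combine the weighted energy with the weighted Cauchy-Schwarz bound. *)
lemma dilation_series_L2:
  assumes f: "L2 f" and l: "l > 0" and w: "0 \<le> w" "w\<^sup>2 < l"
  shows "AE x in lborel. 0 \<le> x \<longrightarrow> orbit_summable w l f x"
    and "(\<integral>\<^sup>+x. ennreal (indicator {0..} x * (\<Sum>k. w^k * cmod (f (l^k * x)))\<^sup>2) \<partial>lborel) < \<infinity>"
proof -
  define \<rho> where "\<rho> = (w\<^sup>2 + l) / 2"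
  have \<rho>: "w\<^sup>2 < \<rho>" "\<rho> > 0" "\<rho> < l"
    using w l unfolding \<rho>_def by (auto simp: field_simps add_pos_nonneg)
  define C where "C = \<rho> / (\<rho> - w\<^sup>2)"
  define b where "b k x = \<rho>^k * (indicator {0..} x * (cmod (f (l^k * x)))\<^sup>2)" for k x
  define G where "G x = (\<Sum>k. ennreal (b k x))" for x
  have b0: "b k x \<ge> 0" for k x unfolding b_def using \<rho> by simp
  have G_fin: "(\<integral>\<^sup>+x. G x \<partial>lborel) < \<infinity>"
    using weighted_orbit_energy[OF f l \<rho>(2,3)] by (simp only: G_def b_def)
  have [measurable]: "f \<in> borel_measurable borel" using f L2_iff_L2sq by auto
  have [measurable]: "G \<in> borel_measurable borel" unfolding G_def b_def by measurable
  have pointwise: "orbit_summable w l f x \<and>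
      ennreal (indicator {0..} x * (\<Sum>k. w^k * cmod (f (l^k * x)))\<^sup>2) \<le> ennreal C * G x"
    if x: "0 \<le> x" "G x \<noteq> \<infinity>" for x
  proof -
    have sb: "summable (\<lambda>k. b k x)"
      using x b0 unfolding G_def by (intro summable_suminf_not_top) auto
    have Gx: "G x = ennreal (\<Sum>k. b k x)"
      unfolding G_def using b0 sb by (intro suminf_ennreal2) auto
    have bx: "b k x = \<rho>^k * (cmod (f (l^k * x)))\<^sup>2" for k using x by (simp add: b_def)
    note bound = weighted_series_sq_bound[of "\<lambda>k. cmod (f (l^k * x))" w \<rho>]
    have "(\<Sum>k. w^k * cmod (f (l^k * x)))\<^sup>2 \<le> C * (\<Sum>k. b k x)"
      using bound(2) sb w \<rho> unfolding bx C_def by simp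
    moreover have "ennreal (C * (\<Sum>k. b k x)) = ennreal C * G x"
      unfolding Gx using b0 sb \<rho> by (intro ennreal_mult) (auto simp: C_def suminf_nonneg)
    ultimately have "ennreal ((\<Sum>k. w^k * cmod (f (l^k * x)))\<^sup>2) \<le> ennreal C * G x"
      by (metis ennreal_leI)
    moreover have "orbit_summable w l f x"
      using bound(1) sb w \<rho> unfolding bx orbit_summable_def by simp
    ultimately show ?thesis using x by simp
  qed
  have AE_G: "AE x in lborel. G x \<noteq> \<infinity>"
    using G_fin by (intro nn_integral_PInf_AE) auto
  then show "AE x in lborel. 0 \<le> x \<longrightarrow> orbit_summable w l f x"
    by eventually_elim (use pointwise in auto)
  have "(\<integral>\<^sup>+x. ennreal (indicator {0..} x * (\<Sum>k. w^k * cmod (f (l^k * x)))\<^sup>2) \<partial>lborel)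
      \<le> (\<integral>\<^sup>+x. ennreal C * G x \<partial>lborel)"
    using AE_G by (intro nn_integral_mono_AE, eventually_elim) (use pointwise in \<open>auto simp: indicator_def\<close>)
  also have "\<dots> = ennreal C * (\<integral>\<^sup>+x. G x \<partial>lborel)"
    by (rule nn_integral_cmult) measurable
  finally show "(\<integral>\<^sup>+x. ennreal (indicator {0..} x * (\<Sum>k. w^k * cmod (f (l^k * x)))\<^sup>2) \<partial>lborel) < \<infinity>"
    using G_fin by (simp add: ennreal_mult_less_top le_less_trans)
qed

lemma dilation_series_in_L2:
  fixes c :: "nat \<Rightarrow> complex"
  assumes f: "L2 f" and l: "l > 0" and w: "0 \<le> w" "w\<^sup>2 < l" and c: "\<And>k. cmod (c k) \<le> w^k"
  shows "L2 (\<lambda>x. \<Sum>k. c k * f (l^k * x))"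
proof -
  have [measurable]: "f \<in> borel_measurable borel" using f L2_iff_L2sq by auto
  have "L2sq (\<lambda>x. \<Sum>k. c k * f (l^k * x))
      \<le> (\<integral>\<^sup>+x. ennreal (indicator {0..} x * (\<Sum>k. w^k * cmod (f (l^k * x)))\<^sup>2) \<partial>lborel)"
    unfolding L2sq_def
  proof (intro nn_integral_mono_AE)
    show "AE x in lborel. ennreal (indicator {0..} x * (cmod (\<Sum>k. c k * f (l^k * x)))\<^sup>2)
        \<le> ennreal (indicator {0..} x * (\<Sum>k. w^k * cmod (f (l^k * x)))\<^sup>2)"
      using dilation_series_L2(1)[OF f l w] proof eventually_elim
      case (elim x)
      show ?case
      proof (cases "0 \<le> x")
        case True
        then have s: "summable (\<lambda>k. w^k * cmod (f (l^k * x)))"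
          using elim by (simp add: orbit_summable_def)
        have "cmod (\<Sum>k. c k * f (l^k * x)) \<le> (\<Sum>k. w^k * cmod (f (l^k * x)))"
          by (rule norm_suminf_le[OF _ s]) (auto simp: norm_mult intro!: mult_right_mono c)
        then have "(cmod (\<Sum>k. c k * f (l^k * x)))\<^sup>2 \<le> (\<Sum>k. w^k * cmod (f (l^k * x)))\<^sup>2"
          by (rule power_mono) simp
        then show ?thesis using True by (simp add: ennreal_leI)
      qed simp
    qed
  qed
  also have "\<dots> < \<infinity>" by (rule dilation_series_L2(2)[OF f l w])
  finally show ?thesis unfolding L2_iff_L2sq by simp
qed

(* The Neumann series sum (-c)^k f(l^k x), formally the inverse of I + c D_l where
   D_l f = f(l .). *)
definition neumann :: "real \<Rightarrow> real \<Rightarrow> (real \<Rightarrow> complex) \<Rightarrow> real \<Rightarrow> complex" where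
  "neumann c l f x = (\<Sum>k. complex_of_real ((- c)^k) * f (l^k * x))"

lemma norm_geom_term: "c \<ge> 0 \<Longrightarrow> norm (complex_of_real ((- c)^k) * z) = c^k * cmod z"
  by (simp add: norm_mult norm_power del: of_real_power of_real_minus)

lemma neumann_summable:
  assumes "orbit_summable c l f x" "c \<ge> 0"
  shows "summable (\<lambda>k. complex_of_real ((- c)^k) * f (l^k * x))"
  by (rule summable_norm_cancel) (use assms in \<open>simp only: orbit_summable_def norm_geom_term\<close>)

lemma neumann_add:
  assumes "orbit_summable c l f x" "orbit_summable c l g x" "c \<ge> 0"
  shows "neumann c l (\<lambda>y. f y + a * g y) x = neumann c l f x + a * neumann c l g x"
  using neumann_summable[OF assms(1,3)] neumann_summable[OF assms(2,3)]
  unfolding neumann_def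
  by (simp add: distrib_left suminf_add[symmetric] suminf_mult[symmetric] summable_mult mult_ac)

lemma neumann_resolvent:
  assumes "orbit_summable c l f x" "c > 0"
  shows "neumann c l f x + c * neumann c l f (l * x) = f x"
proof -
  define F where "F k = complex_of_real ((- c)^k) * f (l^k * x)" for k
  define G where "G k = complex_of_real ((- c)^k) * f (l^k * (l * x))" for k
  have sF: "summable F" unfolding F_def using assms by (intro neumann_summable) auto
  have sG: "summable G" unfolding G_def
    using assms by (intro neumann_summable orbit_summable_step) auto
  have shift: "F (Suc k) = (- complex_of_real c) * G k" for k
    by (simp add: F_def G_def mult.assoc mult.left_commute)
  have "neumann c l f x = suminf F" unfolding neumann_def F_def ..
  then have "neumann c l f x - f x = (\<Sum>k. F (Suc k))"
    unfolding suminf_split_head[OF sF] by (simp add: F_def[of 0])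
  also have "\<dots> = (\<Sum>k. (- complex_of_real c) * G k)"
    by (simp only: shift)
  also have "\<dots> = - complex_of_real c * neumann c l f (l * x)"
    unfolding neumann_def G_def[symmetric] by (rule suminf_mult[OF sG])
  finally show ?thesis by (simp add: algebra_simps)
qed

lemma neumann_inverse:
  assumes "orbit_summable c l h x" "c > 0"
  shows "neumann c l (\<lambda>y. h y + c * h (l * y)) x = h x"
proof -
  have "orbit_summable c l (\<lambda>y. h (l * y)) x"
    using assms by (simp add: orbit_summable_dilate orbit_summable_step)
  then have "neumann c l (\<lambda>y. h y + c * h (l * y)) x
      = neumann c l h x + c * neumann c l (\<lambda>y. h (l * y)) x"
    using assms by (intro neumann_add) auto
  also have "neumann c l (\<lambda>y. h (l * y)) x = neumann c l h (l * x)"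
    unfolding neumann_def by (simp add: mult.left_commute)
  finally show ?thesis using neumann_resolvent[OF assms] by simp
qed

definition q_of :: "nat \<Rightarrow> real" where
  "q_of m = sqrt (real m / 2)"

lemma q_of_pos: "m \<ge> 2 \<Longrightarrow> q_of m > 0"
  unfolding q_of_def by simp

lemma q_of_sq: "(q_of m)\<^sup>2 = real m / 2"
  unfolding q_of_def by simp

lemma acoef_power:
  assumes m: "m \<ge> 2"
  shows "complex_of_real (acoef m (m^k)) = (if k = 0 then 2 else 0) - complex_of_real ((- q_of m)^k)"
proof (cases "k = 0")
  case False
  have "m^k \<noteq> 1" using m False by simp
  moreover have "(THE j. m^k = m^j) = k"
    using m by (intro the_equality) (auto simp: power_inject_exp)
  moreover have "(real m / 2) powr (real k / 2) = (q_of m)^k"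
    using m by (simp add: q_of_def powr_half_sqrt[symmetric] powr_powr powr_realpow flip: powr_realpow)
  ultimately have "acoef m (m^k) = - ((- q_of m)^k)"
    unfolding acoef_def by (auto simp: Let_def power_minus')
  then show ?thesis using False by simp
qed (simp add: acoef_def)

lemma acoef_other:
  assumes "m \<ge> 2" "n \<notin> range (\<lambda>k. m^k)"
  shows "acoef m n = 0"
  using assms unfolding acoef_def by (metis power_0 rangeI)

lemma Top_measurable [measurable]:
  assumes [measurable]: "f \<in> borel_measurable borel"
  shows "Top m f \<in> borel_measurable borel"
  unfolding Top_def by measurable

lemma Top_eq_neumann:
  assumes m: "m \<ge> 2" and s: "orbit_summable (q_of m) m f x"
  shows "Top m f x = 2 * f x - neumann (q_of m) m f x"
proof -
  have "(\<lambda>k. (if k = 0 then 2 * f x else 0)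
      - complex_of_real ((- q_of m)^k) * f (real m ^ k * x)) sums (2 * f x - neumann (q_of m) m f x)"
    unfolding neumann_def
    by (intro sums_diff sums_single summable_sums neumann_summable s) (use q_of_pos[OF m] in auto)
  moreover have "complex_of_real (acoef m (m^k)) * f (real (m^k) * x)
      = (if k = 0 then 2 * f x else 0) - complex_of_real ((- q_of m)^k) * f (real m ^ k * x)" for k
    using acoef_power[OF m, of k] by (cases "k = 0") (simp_all add: left_diff_distrib)
  ultimately have "(\<lambda>k. complex_of_real (acoef m (m^k)) * f (real (m^k) * x)) sums (2 * f x - neumann (q_of m) m f x)"
    by simp
  moreover have "strict_mono (\<lambda>k::nat. m^k)"
    using m by (intro strict_monoI power_strict_increasing) auto
  ultimately have "(\<lambda>n. complex_of_real (acoef m n) * f (real n * x)) sums (2 * f x - neumann (q_of m) m f x)"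
    by (subst sums_mono_reindex[symmetric]) (auto simp: acoef_other[OF m])
  then show ?thesis unfolding Top_def by (rule sums_unique[symmetric])
qed

(* For f in L2 this holds at almost every x >= 0, since q^2 = m/2 < m. *)
lemma AE_orbit_summable_Top:
  assumes m: "m \<ge> 2" and f: "L2 f"
  shows "AE x in lborel. 0 \<le> x \<longrightarrow> orbit_summable (q_of m) m f x"
proof (rule dilation_series_L2(1)[OF f])
  show "(q_of m)\<^sup>2 < real m" using m by (simp add: q_of_sq)
qed (use q_of_pos[OF m] m in auto)

(* Pointwise energy identity: with q^2 = M/2, u = h x and v = h(m x) it relates
   T_m f = h + 2 q D_m h and f = h + q D_m h. *)
lemma energy_identity:
  fixes u v :: complex and q M :: real
  assumes "q\<^sup>2 = M / 2"
  shows "(cmod (u + 2 * q * v))\<^sup>2 + (cmod u)\<^sup>2 = 2 * (cmod (u + q * v))\<^sup>2 + M * (cmod v)\<^sup>2"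
proof -
  have M: "M = 2 * q\<^sup>2" using assms by simp
  show ?thesis unfolding M cmod_power2 by (simp add: power2_eq_square algebra_simps)
qed

(* T_m maps L2 into L2 and doubles the squared norm: integrating the energy identity for
   h = N f, the terms ||h||^2 = m ||D_m h||^2 cancel. *)
lemma Top_isometry:
  assumes m: "m \<ge> 2" and f: "L2 f"
  shows "L2 (Top m f)" and "L2sq (Top m f) = 2 * L2sq f"
proof -
  have [measurable]: "f \<in> borel_measurable borel" and fN: "L2sq f < \<infinity>"
    using f L2_iff_L2sq by auto
  define q where "q = q_of m"
  have q: "q > 0" "q\<^sup>2 = real m / 2"
    using m q_of_pos q_of_sq unfolding q_def by auto
  then have q3: "q\<^sup>2 < real m" using m by simp
  define h where "h = neumann q m f"
  have "L2 h" unfolding h_def neumann_def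
    by (rule dilation_series_in_L2[OF f _ _ q3]) (use q m in \<open>auto simp: norm_power\<close>)
  then have [measurable]: "h \<in> borel_measurable borel" and hN: "L2sq h < \<infinity>"
    using L2_iff_L2sq by auto
  have energy: "(cmod (Top m f x))\<^sup>2 + (cmod (h x))\<^sup>2
      = 2 * (cmod (f x))\<^sup>2 + real m * (cmod (h (m * x)))\<^sup>2"
    if s: "orbit_summable q m f x" for x :: real
  proof -
    have "f x = h x + q * h (m * x)"
      using neumann_resolvent[OF s q(1)] by (simp add: h_def)
    moreover have "Top m f x = h x + 2 * q * h (m * x)"
      using Top_eq_neumann[OF m s[unfolded q_def]] calculation by (simp add: h_def q_def)
    ultimately show ?thesis using energy_identity[OF q(2)] by simp
  qed
  have "AE x in lborel. 0 \<le> x \<longrightarrow> (cmod (Top m f x))\<^sup>2 + (cmod (h x))\<^sup>2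
      = 2 * (cmod (f x))\<^sup>2 + real m * (cmod (h (m * x)))\<^sup>2"
    using AE_orbit_summable_Top[OF m f] by eventually_elim (simp add: energy q_def)
  then have "L2sq (Top m f) + L2sq h = ennreal 2 * L2sq f + ennreal (real m) * L2sq (\<lambda>x. h (m * x))"
    by (intro L2sq_pointwise_identity) auto
  also have "ennreal (real m) * L2sq (\<lambda>x. h (m * x)) = L2sq h"
    using m by (simp add: L2sq_dilate mult.assoc[symmetric] flip: ennreal_mult)
  finally show TN: "L2sq (Top m f) = 2 * L2sq f"
    using hN by (auto simp: ennreal_add_left_cancel add.commute)
  show "L2 (Top m f)"
    unfolding L2_iff_L2sq TN using fN by (simp add: ennreal_mult_less_top)
qed

lemma Top_L2norm:
  assumes "m \<ge> 2" "L2 f"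
  shows "L2norm (Top m f) = sqrt 2 * L2norm f"
proof -
  have [measurable]: "f \<in> borel_measurable borel" using assms L2_iff_L2sq by auto
  show ?thesis using Top_isometry(2)[OF assms]
    by (simp add: L2norm_L2sq enn2real_mult real_sqrt_mult)
qed

lemma Top_linear_ae:
  assumes m: "m \<ge> 2" and f: "L2 f" and g: "L2 g"
  shows "AE x in lborel. 0 \<le> x \<longrightarrow> Top m (\<lambda>y. f y + c * g y) x = Top m f x + c * Top m g x"
  using AE_orbit_summable_Top[OF m f] AE_orbit_summable_Top[OF m g]
proof eventually_elim
  case (elim x)
  have q: "q_of m > 0" using q_of_pos[OF m] .
  show ?case
  proof
    assume "0 \<le> x"
    with elim have sf: "orbit_summable (q_of m) m f x" and sg: "orbit_summable (q_of m) m g x"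
      by auto
    have "orbit_summable (q_of m) m (\<lambda>y. f y + c * g y) x"
      using sf sg q by (intro orbit_summable_add) auto
    then show "Top m (\<lambda>y. f y + c * g y) x = Top m f x + c * Top m g x"
      using sf sg q
      by (simp add: Top_eq_neumann[OF m] neumann_add algebra_simps)
  qed
qed

lemma Top_of_resolvent_image:
  fixes h :: "real \<Rightarrow> complex"
  assumes m: "m \<ge> 2" and h: "orbit_summable (q_of m) m h x"
  shows "Top m (\<lambda>y::real. h y + q_of m * h (m * y)) x = h x + 2 * q_of m * h (m * x)"
proof -
  have q: "q_of m > 0" by (rule q_of_pos[OF m])
  have "orbit_summable (q_of m) m (\<lambda>y. h (m * y)) x"
    using h q by (simp add: orbit_summable_dilate orbit_summable_step)
  then have "orbit_summable (q_of m) m (\<lambda>y. h y + q_of m * h (m * y)) x"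
    using h q by (intro orbit_summable_add) auto
  then show ?thesis
    using Top_eq_neumann[OF m] neumann_inverse[OF h q] by simp
qed

(* T_m is onto up to the factor sqrt 2.  Invert I + 2q D_m = 2q D_m (I + s D_(1/m)),
   s = 1/(2q), by the Neumann series sigma of g for I + s D_(1/m) (convergent since
   s^2 = 1/(2m)), and set h = (sqrt 2/(2q)) sigma(./m), f = h + q D_m h. *)
lemma Top_surjective:
  fixes g :: "real \<Rightarrow> complex"
  assumes m: "m \<ge> 2" and g: "L2 g"
  shows "\<exists>f. L2 f \<and> (AE x in lborel. 0 \<le> x \<longrightarrow> Top m f x = complex_of_real (sqrt 2) * g x)"
proof -
  define q where "q = q_of m"
  have q: "q > 0" using q_of_pos[OF m] by (simp add: q_def)
  define l where "l = 1 / real m"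
  define s where "s = 1 / (2 * q)"
  define a where "a = sqrt 2 / (2 * q)"
  have l: "l > 0" and ml: "real m * l = 1" using m by (auto simp: l_def)
  have "s\<^sup>2 = l / 2"
    using q_of_sq[of m] q by (simp add: s_def l_def q_def power_divide power_mult_distrib)
  then have s: "s > 0" "s\<^sup>2 < l" using q l by (auto simp: s_def)
  have constants: "2 * q * s = 1" "2 * q * a = sqrt 2" using q by (simp_all add: s_def a_def)
  define \<sigma> where "\<sigma> = neumann s l g"
  define h where "h x = a * \<sigma> (l * x)" for x :: real
  define f where "f = (\<lambda>y::real. h y + q * h (m * y))"
  have AE_g: "AE x in lborel. 0 \<le> x \<longrightarrow> orbit_summable s l g x"
    by (rule dilation_series_L2(1)[OF g l _ s(2)]) (use s in auto)
  have "L2 \<sigma>" unfolding \<sigma>_def neumann_def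
    by (rule dilation_series_in_L2[OF g l _ s(2)]) (use s in \<open>auto simp: norm_power\<close>)
  then have hL2: "L2 h" unfolding h_def using l by (intro L2_cmult L2_dilate)
  then have "L2 f" unfolding f_def using m by (intro L2_add L2_cmult L2_dilate) auto
  moreover have "AE x in lborel. 0 \<le> x \<longrightarrow> Top m f x = complex_of_real (sqrt 2) * g x"
    using AE_g AE_orbit_summable_Top[OF m hL2]
  proof eventually_elim
    case (elim x)
    show ?case
    proof
      assume "0 \<le> x"
      with elim have sg: "orbit_summable s l g x" and sh: "orbit_summable q m h x"
        by (auto simp: q_def)
      have "Top m f x = h x + 2 * q * h (m * x)"
        using Top_of_resolvent_image[OF m sh[unfolded q_def]] by (simp add: f_def q_def)
      also have "\<dots> = a * \<sigma> (l * x) + 2 * q * (a * \<sigma> x)"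
        using ml by (simp add: h_def mult.assoc[symmetric] mult.commute[of l])
      also have "\<sigma> x = g x - s * \<sigma> (l * x)"
        using neumann_resolvent[OF sg s(1)] by (simp add: \<sigma>_def algebra_simps)
      also have "a * \<sigma> (l * x) + 2 * q * (a * (g x - s * \<sigma> (l * x)))
          = (2 * q * a) * g x + a * (1 - 2 * q * s) * \<sigma> (l * x)"
        by (simp add: algebra_simps)
      finally show "Top m f x = complex_of_real (sqrt 2) * g x" using constants by simp
    qed
  qed
  ultimately show ?thesis by blast
qed

theorem mainTheorem9:
  fixes m :: nat
  assumes "m \<ge> 2"
  shows "(\<forall>f. C0 f \<longrightarrow> L2norm (Top m f) = sqrt 2 * L2norm f)
    \<and> (\<exists>U :: (real \<Rightarrow> complex) \<Rightarrow> (real \<Rightarrow> complex).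
         (\<forall>f. L2 f \<longrightarrow> L2 (U f))
       \<and> (\<forall>f g c. L2 f \<longrightarrow> L2 g \<longrightarrow> ae_eq0 (U (\<lambda>x. f x + c * g x)) (\<lambda>x. U f x + c * U g x))
       \<and> (\<forall>f. L2 f \<longrightarrow> L2norm (U f) = L2norm f)
       \<and> (\<forall>g. L2 g \<longrightarrow> (\<exists>f. L2 f \<and> ae_eq0 (U f) g))
       \<and> (\<forall>f. C0 f \<longrightarrow> ae_eq0 (Top m f) (\<lambda>x. complex_of_real (sqrt 2) * U f x)))"
proof -
  note m = assms
  define U where "U f = (\<lambda>x. complex_of_real (1 / sqrt 2) * Top m f x)" for f
  have "L2 (U f)" if "L2 f" for f
    unfolding U_def by (intro L2_cmult Top_isometry(1)[OF m that])
  moreover have "ae_eq0 (U (\<lambda>x. f x + c * g x)) (\<lambda>x. U f x + c * U g x)"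
    if "L2 f" "L2 g" for f g c
    using Top_linear_ae[OF m that, of c] unfolding ae_eq0_def
    by eventually_elim (auto simp: U_def add_divide_distrib)
  moreover have "L2norm (U f) = L2norm f" if f: "L2 f" for f
  proof -
    have "f \<in> borel_measurable borel" using f L2_iff_L2sq by blast
    then have "L2norm (U f) = (1 / sqrt 2) * L2norm (Top m f)"
      unfolding U_def by (subst L2norm_cmult) (auto simp: norm_divide)
    then show ?thesis using Top_L2norm[OF m f] by simp
  qed
  moreover have "\<exists>f. L2 f \<and> ae_eq0 (U f) g" if g: "L2 g" for g
  proof -
    obtain f where "L2 f" and "AE x in lborel. 0 \<le> x \<longrightarrow> Top m f x = complex_of_real (sqrt 2) * g x"
      using Top_surjective[OF m g] by blast
    then show ?thesis unfolding ae_eq0_def by (auto elim!: eventually_mono simp: U_def)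
  qed
  moreover have "ae_eq0 (Top m f) (\<lambda>x. complex_of_real (sqrt 2) * U f x)" for f
    unfolding ae_eq0_def U_def by (simp flip: of_real_mult)
  ultimately show ?thesis
    using Top_L2norm[OF m C0_imp_L2] by blast
qed

end
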